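(* Let $T>0$, $I=[0,T]$. Let $\Phi:\mathbb{R}\to\mathbb{R}$ be a strictly increasing homeomorphism; $a\in C(I\times\mathbb{R},\mathbb{R})$ with $a(t,x)\ge h(t)$ for all $(t,x)$, where $h\in C(I,\mathbb{R})$, $h\ge0$, $1/h\in L^p(I)$ for some $p>1$; $f:I\times\mathbb{R}^2\to\mathbb{R}$ Carathéodory. Let $\alpha,\beta\in W^{1,p}(I)$ be respectively a lower and an upper solution of $(\Phi(a(t,x(t))x'(t)))'=f(t,x(t),x'(t))$ with $\alpha\le\beta$ on $I$, and assume $a(0,x)\ne0$ and $a(T,x)\ne0$ for every $x\in\mathbb{R}$. Then: (i) if $\alpha(0)=\beta(0)$, then $\mathcal{A}_\alpha(0)\le\mathcal{A}_\beta(0)$; (ii) if $\alpha(T)=\beta(T)$, then $\mathcal{A}_\alpha(T)\ge\mathcal{A}_\beta(T)$.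
   Context: A continuous $\alpha$ is a lower [upper] solution if $\alpha\in W^{1,1}(I)$, $t\mapsto\Phi(a(t,\alpha(t))\alpha'(t))\in W^{1,1}(I)$ and its derivative is $\ge f(t,\alpha(t),\alpha'(t))$ [$\le$] for a.e. $t$. $\mathcal{A}_\alpha$ denotes the unique continuous function on $I$ equal to $a(t,\alpha(t))\alpha'(t)$ a.e. Carathéodory: measurable in $t$, continuous in $(x,y)$ for a.e. $t$. *)

theory Defs
  imports "HOL-Analysis.Analysis"
begin

definition ae_on :: "real \<Rightarrow> (real \<Rightarrow> bool) \<Rightarrow> bool" where
  "ae_on T P \<longleftrightarrow> (\<exists>N. negligible N \<and> (\<forall>t\<in>{0..T} - N. P t))"

definition Lp_on :: "real \<Rightarrow> real \<Rightarrow> (real \<Rightarrow> real) \<Rightarrow> bool" where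
  "Lp_on p T g \<longleftrightarrow> g measurable_on {0..T} \<and> (\<lambda>t. \<bar>g t\<bar> powr p) integrable_on {0..T}"

text \<open>u (continuous representative) lies in W^{1,1}(I) with weak derivative u'
  (i.e. u is absolutely continuous on I with u' as a.e. derivative).\<close>
definition W11_deriv :: "real \<Rightarrow> (real \<Rightarrow> real) \<Rightarrow> (real \<Rightarrow> real) \<Rightarrow> bool" where
  "W11_deriv T u u' \<longleftrightarrow> u' absolutely_integrable_on {0..T} \<and>
     (\<forall>t\<in>{0..T}. u t = u 0 + integral {0..t} u')"

definition in_W1p :: "real \<Rightarrow> real \<Rightarrow> (real \<Rightarrow> real) \<Rightarrow> bool" where
  "in_W1p p T u \<longleftrightarrow> (\<exists>u'. W11_deriv T u u' \<and> Lp_on p T u')"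

definition caratheodory :: "real \<Rightarrow> (real \<Rightarrow> real \<Rightarrow> real \<Rightarrow> real) \<Rightarrow> bool" where
  "caratheodory T f \<longleftrightarrow> (\<forall>x y. (\<lambda>t. f t x y) measurable_on {0..T}) \<and>
     ae_on T (\<lambda>t. continuous_on UNIV (\<lambda>(x, y). f t x y))"

definition lower_solution ::
  "real \<Rightarrow> (real \<Rightarrow> real) \<Rightarrow> (real \<Rightarrow> real \<Rightarrow> real) \<Rightarrow> (real \<Rightarrow> real \<Rightarrow> real \<Rightarrow> real)
    \<Rightarrow> (real \<Rightarrow> real) \<Rightarrow> bool" where
  "lower_solution T \<Phi> a f \<alpha> \<longleftrightarrow> continuous_on {0..T} \<alpha> \<and>
     (\<exists>\<alpha>'. W11_deriv T \<alpha> \<alpha>' \<and>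
       (\<exists>w w'. W11_deriv T w w' \<and> ae_on T (\<lambda>t. w t = \<Phi> (a t (\<alpha> t) * \<alpha>' t)) \<and>
               ae_on T (\<lambda>t. w' t \<ge> f t (\<alpha> t) (\<alpha>' t))))"

definition upper_solution ::
  "real \<Rightarrow> (real \<Rightarrow> real) \<Rightarrow> (real \<Rightarrow> real \<Rightarrow> real) \<Rightarrow> (real \<Rightarrow> real \<Rightarrow> real \<Rightarrow> real)
    \<Rightarrow> (real \<Rightarrow> real) \<Rightarrow> bool" where
  "upper_solution T \<Phi> a f \<beta> \<longleftrightarrow> continuous_on {0..T} \<beta> \<and>
     (\<exists>\<beta>'. W11_deriv T \<beta> \<beta>' \<and>
       (\<exists>w w'. W11_deriv T w w' \<and> ae_on T (\<lambda>t. w t = \<Phi> (a t (\<beta> t) * \<beta>' t)) \<and>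
               ae_on T (\<lambda>t. w' t \<le> f t (\<beta> t) (\<beta>' t))))"

definition is_calA :: "real \<Rightarrow> (real \<Rightarrow> real \<Rightarrow> real) \<Rightarrow> (real \<Rightarrow> real) \<Rightarrow> (real \<Rightarrow> real) \<Rightarrow> bool" where
  "is_calA T a u A \<longleftrightarrow> continuous_on {0..T} A \<and>
     (\<exists>u'. W11_deriv T u u' \<and> ae_on T (\<lambda>t. A t = a t (u t) * u' t))"

end

theory Submission
  imports Defs
begin

(* Suppose alpha(0) = beta(0) but A_alpha(0) > A_beta(0). Since a(0, alpha(0)) > 0 and a, alpha,
   beta, A_alpha, A_beta are continuous, alpha' - beta' = A_alpha / a(t, alpha) - A_beta / a(t, beta)
   stays above some c > 0 for almost every t near 0; integrating, alpha - beta > 0 just to the right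
   of 0, contradicting alpha <= beta. At T one looks to the left instead. Only alpha <= beta, the
   continuity of a and a > 0 at the endpoints (from a >= h >= 0 and a <> 0) are used. *)

lemma W11_deriv_integrable_on:
  assumes "W11_deriv T u u'" "0 \<le> s" "t \<le> T"
  shows "u' integrable_on {s..t}"
  using assms integrable_on_subinterval[of u' "{0..T}" s t]
  unfolding W11_deriv_def absolutely_integrable_on_def by auto

lemma W11_deriv_eq_integral:
  assumes "W11_deriv T u u'" "t \<in> {0..T}"
  shows "u t = u 0 + integral {0..t} u'"
  using assms unfolding W11_deriv_def by blast

lemma W11_deriv_increment:
  assumes "W11_deriv T u u'" "0 \<le> s" "s \<le> t" "t \<le> T"
  shows "u t - u s = integral {s..t} u'"
proof -
  have "integral {0..s} u' + integral {s..t} u' = integral {0..t} u'"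
    using Henstock_Kurzweil_Integration.integral_combine[OF assms(2,3)]
      W11_deriv_integrable_on[OF assms(1) order_refl assms(4)] by blast
  moreover have "u t = u 0 + integral {0..t} u'" "u s = u 0 + integral {0..s} u'"
    using assms by (auto intro: W11_deriv_eq_integral)
  ultimately show ?thesis
    by linarith
qed

lemma W11_deriv_continuous_on:
  assumes "W11_deriv T u u'"
  shows "continuous_on {0..T} u"
proof -
  have "continuous_on {0..T} (\<lambda>t. u 0 + integral {0..t} u')"
    using assms by (intro continuous_intros indefinite_integral_continuous_1 W11_deriv_integrable_on) auto
  then show ?thesis
    by (rule continuous_on_eq) (rule W11_deriv_eq_integral[OF assms, symmetric])
qed

lemma W11_deriv_diff:
  assumes "W11_deriv T u u'" "W11_deriv T v v'"
  shows "W11_deriv T (\<lambda>t. u t - v t) (\<lambda>t. u' t - v' t)"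
  unfolding W11_deriv_def
proof (intro conjI ballI)
  show "(\<lambda>t. u' t - v' t) absolutely_integrable_on {0..T}"
    using assms unfolding W11_deriv_def by (blast intro: set_integral_diff(1))
  fix t assume t: "t \<in> {0..T}"
  then have "integral {0..t} (\<lambda>t. u' t - v' t) = integral {0..t} u' - integral {0..t} v'"
    using assms by (auto intro!: integral_diff W11_deriv_integrable_on)
  then show "u t - v t = u 0 - v 0 + integral {0..t} (\<lambda>t. u' t - v' t)"
    using W11_deriv_eq_integral[OF assms(1) t] W11_deriv_eq_integral[OF assms(2) t] by linarith
qed

lemma W11_deriv_increment_ge:
  assumes w: "W11_deriv T w w'" and st: "0 \<le> s" "s \<le> t" "t \<le> T"
    and N: "negligible N" and bound: "\<And>x. x \<in> {s..t} - N \<Longrightarrow> c \<le> w' x"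
  shows "c * (t - s) \<le> w t - w s"
proof -
  define w\<^sub>c where "w\<^sub>c x = (if x \<in> N then c else w' x)" for x
  have int: "w' integrable_on {s..t}"
    using w st(1,3) by (rule W11_deriv_integrable_on)
  have "integral {s..t} w\<^sub>c = integral {s..t} w'"
    using N by (rule integral_spike) (simp add: w\<^sub>c_def)
  moreover have "integral {s..t} (\<lambda>_. c) \<le> integral {s..t} w\<^sub>c"
  proof (rule integral_le)
    show "w\<^sub>c integrable_on {s..t}"
      using int N by (rule integrable_spike) (simp add: w\<^sub>c_def)
  qed (use bound in \<open>auto simp: w\<^sub>c_def\<close>)
  ultimately show ?thesis
    using W11_deriv_increment[OF w st] st by (simp add: mult.commute)
qed

lemma eventually_gap_of_quotients:
  fixes f g p q :: "'a \<Rightarrow> real"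
  assumes f: "(f \<longlongrightarrow> y) F" and g: "(g \<longlongrightarrow> z) F" and p: "(p \<longlongrightarrow> l) F" and q: "(q \<longlongrightarrow> l) F"
    and l: "0 < l" and gap: "z < y"
  obtains c where "c > 0" "\<forall>\<^sub>F x in F. c < f x / p x - g x / q x \<and> 0 < p x \<and> 0 < q x"
proof -
  define \<delta> where "\<delta> = y / l - z / l"
  have \<delta>: "\<delta> > 0"
    using gap l by (simp add: \<delta>_def flip: diff_divide_distrib)
  have "((\<lambda>x. f x / p x - g x / q x) \<longlongrightarrow> \<delta>) F"
    unfolding \<delta>_def using l by (intro tendsto_diff tendsto_divide f g p q) auto
  moreover have "\<delta> / 2 < \<delta>"
    using \<delta> by simp
  ultimately have "\<forall>\<^sub>F x in F. \<delta> / 2 < f x / p x - g x / q x"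
    by (rule order_tendstoD(1))
  with order_tendstoD(1)[OF p l] order_tendstoD(1)[OF q l]
  have "\<forall>\<^sub>F x in F. \<delta> / 2 < f x / p x - g x / q x \<and> 0 < p x \<and> 0 < q x"
    by eventually_elim simp
  then show thesis
    using \<delta> that[of "\<delta> / 2"] by simp
qed

lemma continuous_on_compose_graph:
  assumes "continuous_on ({0..T} \<times> UNIV) (\<lambda>(t, x). a t x)" "continuous_on {0..T} u"
  shows "continuous_on {0..T} (\<lambda>t. a t (u t))"
proof -
  have "continuous_on {0..T} (\<lambda>t. (t, u t))"
    using assms(2) by (intro continuous_intros)
  then show ?thesis
    using continuous_on_compose2[OF assms(1)] by fastforce
qed

lemma is_calA_deriv_gap_near:
  assumes calA: "is_calA T a u Au" "is_calA T a v Av"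
    and a_cont: "continuous_on ({0..T} \<times> UNIV) (\<lambda>(t, x). a t x)"
    and t0: "t0 \<in> {0..T}" and contact: "u t0 = v t0" and pos: "a t0 (u t0) > 0"
    and gap: "Av t0 < Au t0"
  obtains w' N c d where "W11_deriv T (\<lambda>t. u t - v t) w'" "negligible N" "c > 0" "d > 0"
    "\<And>t. t \<in> {0..T} - N \<Longrightarrow> \<bar>t - t0\<bar> < d \<Longrightarrow> c \<le> w' t"
proof -
  obtain u' Nu where u': "W11_deriv T u u'" "negligible Nu" "\<forall>t\<in>{0..T} - Nu. Au t = a t (u t) * u' t"
    and Au_cont: "continuous_on {0..T} Au"
    using calA(1) unfolding is_calA_def ae_on_def by blast
  obtain v' Nv where v': "W11_deriv T v v'" "negligible Nv" "\<forall>t\<in>{0..T} - Nv. Av t = a t (v t) * v' t"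
    and Av_cont: "continuous_on {0..T} Av"
    using calA(2) unfolding is_calA_def ae_on_def by blast
  have "continuous_on {0..T} (\<lambda>t. a t (u t))" "continuous_on {0..T} (\<lambda>t. a t (v t))"
    using a_cont u'(1) v'(1) by (auto intro: continuous_on_compose_graph W11_deriv_continuous_on)
  then have "(Au \<longlongrightarrow> Au t0) (at t0 within {0..T})" "(Av \<longlongrightarrow> Av t0) (at t0 within {0..T})"
    and "((\<lambda>t. a t (u t)) \<longlongrightarrow> a t0 (u t0)) (at t0 within {0..T})"
    and "((\<lambda>t. a t (v t)) \<longlongrightarrow> a t0 (v t0)) (at t0 within {0..T})"
    using Au_cont Av_cont t0 by (simp_all add: continuous_on_def)
  then obtain c where c: "c > 0" and "\<forall>\<^sub>F t in at t0 within {0..T}.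
      c < Au t / a t (u t) - Av t / a t (v t) \<and> 0 < a t (u t) \<and> 0 < a t (v t)"
    using pos gap unfolding contact by (rule eventually_gap_of_quotients)
  then obtain d where d: "d > 0" and near: "\<And>t. t \<in> {0..T} \<Longrightarrow> t \<noteq> t0 \<Longrightarrow> dist t t0 < d \<Longrightarrow>
      c < Au t / a t (u t) - Av t / a t (v t) \<and> 0 < a t (u t) \<and> 0 < a t (v t)"
    unfolding eventually_at by blast
  show thesis
  proof
    show "W11_deriv T (\<lambda>t. u t - v t) (\<lambda>t. u' t - v' t)"
      using u'(1) v'(1) by (rule W11_deriv_diff)
    show "negligible (Nu \<union> Nv \<union> {t0})"
      using u'(2) v'(2) by simp
    fix t assume t: "t \<in> {0..T} - (Nu \<union> Nv \<union> {t0})" and "\<bar>t - t0\<bar> < d"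
    then have "c < Au t / a t (u t) - Av t / a t (v t)" "0 < a t (u t)" "0 < a t (v t)"
      using near[of t] by (auto simp: dist_real_def)
    moreover have "Au t = a t (u t) * u' t" "Av t = a t (v t) * v' t"
      using t u'(3) v'(3) by auto
    ultimately show "c \<le> u' t - v' t"
      by simp
  qed (fact c d)+
qed

lemma is_calA_le_at_contact_from_right:
  assumes calA: "is_calA T a u Au" "is_calA T a v Av"
    and a_cont: "continuous_on ({0..T} \<times> UNIV) (\<lambda>(t, x). a t x)"
    and below: "\<forall>t\<in>{0..T}. u t \<le> v t"
    and t0: "0 \<le> t0" "t0 < T" and contact: "u t0 = v t0" and pos: "a t0 (u t0) > 0"
  shows "Au t0 \<le> Av t0"
proof (rule ccontr)
  assume "\<not> Au t0 \<le> Av t0"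
  then have gap: "Av t0 < Au t0"
    by simp
  have t0': "t0 \<in> {0..T}"
    using t0 by simp
  obtain w' N c d where w': "W11_deriv T (\<lambda>t. u t - v t) w'" and N: "negligible N"
    and c: "c > 0" and d: "d > 0" and slope: "\<And>t. t \<in> {0..T} - N \<Longrightarrow> \<bar>t - t0\<bar> < d \<Longrightarrow> c \<le> w' t"
    using is_calA_deriv_gap_near[OF calA a_cont t0' contact pos gap] by blast
  define s where "s = min (t0 + d / 2) T"
  have s: "t0 < s" "s \<le> T" "s - t0 < d"
    using t0 d by (auto simp: s_def)
  have "c * (s - t0) \<le> (u s - v s) - (u t0 - v t0)"
    using w' t0(1) _ s(2) N by (rule W11_deriv_increment_ge) (use s t0 in \<open>auto intro: slope\<close>)
  moreover have "0 < c * (s - t0)"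
    using c s by simp
  moreover have "u s \<le> v s"
    using below s t0 by simp
  ultimately show False
    using contact by linarith
qed

lemma is_calA_ge_at_contact_from_left:
  assumes calA: "is_calA T a u Au" "is_calA T a v Av"
    and a_cont: "continuous_on ({0..T} \<times> UNIV) (\<lambda>(t, x). a t x)"
    and below: "\<forall>t\<in>{0..T}. u t \<le> v t"
    and t0: "0 < t0" "t0 \<le> T" and contact: "u t0 = v t0" and pos: "a t0 (u t0) > 0"
  shows "Av t0 \<le> Au t0"
proof (rule ccontr)
  assume "\<not> Av t0 \<le> Au t0"
  then have gap: "Au t0 < Av t0"
    by simp
  have t0': "t0 \<in> {0..T}" and pos': "a t0 (v t0) > 0"
    using t0 pos contact by simp_all
  obtain w' N c d where w': "W11_deriv T (\<lambda>t. v t - u t) w'" and N: "negligible N"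
    and c: "c > 0" and d: "d > 0" and slope: "\<And>t. t \<in> {0..T} - N \<Longrightarrow> \<bar>t - t0\<bar> < d \<Longrightarrow> c \<le> w' t"
    using is_calA_deriv_gap_near[OF calA(2,1) a_cont t0' contact[symmetric] pos' gap] by blast
  define s where "s = max (t0 - d / 2) 0"
  have s: "0 \<le> s" "s < t0" "t0 - s < d"
    using t0 d by (auto simp: s_def)
  have "c * (t0 - s) \<le> (v t0 - u t0) - (v s - u s)"
    using w' s(1) _ t0(2) N by (rule W11_deriv_increment_ge) (use s t0 in \<open>auto intro: slope\<close>)
  moreover have "0 < c * (t0 - s)"
    using c s by simp
  moreover have "u s \<le> v s"
    using below s t0 by simp
  ultimately show False
    using contact by linarith
qed

theorem lemma4p3:
  fixes T p :: real and \<Phi> h :: "real \<Rightarrow> real" and a :: "real \<Rightarrow> real \<Rightarrow> real"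
    and f :: "real \<Rightarrow> real \<Rightarrow> real \<Rightarrow> real" and \<alpha> \<beta> A\<alpha> A\<beta> :: "real \<Rightarrow> real"
  assumes "T > 0"
    and "strict_mono \<Phi>" and "\<exists>\<Psi>. homeomorphism UNIV UNIV \<Phi> \<Psi>"
    and "continuous_on ({0..T} \<times> UNIV) (\<lambda>(t, x). a t x)"
    and "\<forall>t\<in>{0..T}. \<forall>x. a t x \<ge> h t"
    and "continuous_on {0..T} h" and "\<forall>t\<in>{0..T}. h t \<ge> 0"
    and "p > 1" and "negligible {t\<in>{0..T}. h t = 0}" and "Lp_on p T (\<lambda>t. 1 / h t)"
    and "caratheodory T f"
    and "in_W1p p T \<alpha>" and "in_W1p p T \<beta>"
    and "lower_solution T \<Phi> a f \<alpha>" and "upper_solution T \<Phi> a f \<beta>"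
    and "\<forall>t\<in>{0..T}. \<alpha> t \<le> \<beta> t"
    and "\<forall>x. a 0 x \<noteq> 0" and "\<forall>x. a T x \<noteq> 0"
    and "is_calA T a \<alpha> A\<alpha>" and "is_calA T a \<beta> A\<beta>"
  shows "(\<alpha> 0 = \<beta> 0 \<longrightarrow> A\<alpha> 0 \<le> A\<beta> 0) \<and> (\<alpha> T = \<beta> T \<longrightarrow> A\<alpha> T \<ge> A\<beta> T)"
proof -
  have endpoints: "0 \<in> {0..T}" "T \<in> {0..T}"
    using assms(1) by auto
  have a0_pos: "a 0 x > 0" and aT_pos: "a T x > 0" for x
  proof -
    have "0 \<le> h 0" "h 0 \<le> a 0 x" "0 \<le> h T" "h T \<le> a T x"
      using assms(5,7) endpoints by auto
    then show "a 0 x > 0" "a T x > 0"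
      using assms(17,18) by (metis antisym_conv1 order_trans)+
  qed
  show ?thesis
    using is_calA_le_at_contact_from_right[OF assms(19,20,4,16) order_refl assms(1) _ a0_pos]
      is_calA_ge_at_contact_from_left[OF assms(19,20,4,16) assms(1) order_refl _ aT_pos]
    by blast
qed

end
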